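(* Let $\mathcal{G}=(V,E)$ be a connected hypergraph with $n>2$ vertices. Then $$\lambda_n(L_{\mathcal{G}})\ge\min\left\{\frac{d_{i_1}+d_{i_2}+\dots+d_{i_{|e|}}-|e|}{|e|}:\ e=\{i_1,\dots,i_{|e|}\}\in E\right\}.$$
   Context: A hypergraph $\mathcal{G}=(V,E)$ has a finite vertex set $V$ and a set $E$ of subsets of $V$ (edges), each of cardinality at least $2$. The degree $d_i$ is the number of edges containing $i$. The Laplacian $L_{\mathcal{G}}$ has $(L_{\mathcal{G}})_{ii}=d_i$ and $(L_{\mathcal{G}})_{ij}=-\sum_{e\in E,\, i,j\in e}\frac{1}{|e|-1}$ for $i\ne j$; $\lambda_n(L_{\mathcal{G}})$ is its largest eigenvalue. *)

theory Defs
  imports "HOL-Analysis.Analysis"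
begin

text \<open>A hypergraph with vertex set the finite type 'n (V = UNIV) and edge set E.\<close>

definition hypergraph :: "'n::finite set set \<Rightarrow> bool" where
  "hypergraph E \<longleftrightarrow> (\<forall>e\<in>E. card e \<ge> 2)"

definition hdeg :: "'n::finite set set \<Rightarrow> 'n \<Rightarrow> nat" where
  "hdeg E i = card {e\<in>E. i \<in> e}"

definition hadj :: "'n::finite set set \<Rightarrow> ('n \<times> 'n) set" where
  "hadj E = {(i, j). \<exists>e\<in>E. i \<in> e \<and> j \<in> e}"

definition hconnected :: "'n::finite set set \<Rightarrow> bool" where
  "hconnected E \<longleftrightarrow> (\<forall>i j. (i, j) \<in> (hadj E)\<^sup>*)"

definition hlaplacian :: "'n::finite set set \<Rightarrow> real^'n^'n" where
  "hlaplacian E = (\<chi> i j. if i = j then real (hdeg E i)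
      else - (\<Sum>e\<in>{e\<in>E. i \<in> e \<and> j \<in> e}. 1 / (real (card e) - 1)))"

definition real_eigenvalues :: "real^'n^'n \<Rightarrow> real set" where
  "real_eigenvalues A = {\<mu>. \<exists>v. v \<noteq> 0 \<and> A *v v = \<mu> *\<^sub>R v}"

definition largest_eigenvalue :: "real^'n^'n \<Rightarrow> real" where
  "largest_eigenvalue A = Max (real_eigenvalues A)"

end

theory Submission
  imports Defs
begin

text \<open>The largest eigenvalue of a real symmetric matrix is the maximum of its Rayleigh quotient,
  so testing with a basis vector shows that it dominates every diagonal entry; for the Laplacian
  these are the degrees. Hence it is at least the maximum degree, which is at least the average
  degree over any edge e and hence at least the quantity minimised on the right. Connectedness and
  n > 2 only serve to make the edge set nonempty.\<close>

lemma symmetric_matrix_inner_commute: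
  fixes A :: "real^'n^'n"
  assumes "transpose A = A"
  shows "x \<bullet> (A *v y) = (A *v x) \<bullet> y"
proof -
  have "x \<bullet> (A *v y) = (x v* A) \<bullet> y"
    by (simp add: dot_lmul_matrix)
  also have "x v* A = transpose A *v x"
    by (simp add: vector_transpose_matrix[symmetric])
  finally show ?thesis using assms by simp
qed

lemma quadratic_nonneg_imp_linear_coeff_zero:
  fixes b c :: real
  assumes nonneg: "\<And>t. 0 \<le> b * t + c * t^2"
  shows "b = 0"
proof (rule ccontr)
  assume "b \<noteq> 0"
  define s where "s = \<bar>c\<bar> + 1"
  have s: "s > 0" "c \<le> s - 1" by (auto simp: s_def)
  have "0 \<le> b * (- b / s) + c * (- b / s)^2" by (rule nonneg)
  also have "\<dots> = b^2 / s^2 * (c - s)"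
    using s by (simp add: field_simps power2_eq_square)
  also have "\<dots> < 0"
    using \<open>b \<noteq> 0\<close> s by (intro mult_pos_neg) auto
  finally show False by simp
qed

lemma quadratic_form_attains_max_on_sphere:
  fixes A :: "real^'n^'n"
  obtains x0 where "norm x0 = 1" "\<And>x. x \<bullet> (A *v x) \<le> (x0 \<bullet> (A *v x0)) * (x \<bullet> x)"
proof -
  let ?S = "sphere (0::real^'n) 1"
  have "\<exists>x\<in>?S. \<forall>y\<in>?S. y \<bullet> (A *v y) \<le> x \<bullet> (A *v x)"
  proof (rule continuous_attains_sup)
    show "?S \<noteq> {}" using norm_axis_1 by (metis mem_sphere_0 empty_iff)
    show "continuous_on ?S (\<lambda>y. y \<bullet> (A *v y))"
      by (intro continuous_intros matrix_vector_mult_linear_continuous_on)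
  qed simp
  then obtain x0 where x0: "norm x0 = 1"
    and max: "\<And>y. norm y = 1 \<Longrightarrow> y \<bullet> (A *v y) \<le> x0 \<bullet> (A *v x0)"
    by auto
  have "x \<bullet> (A *v x) \<le> (x0 \<bullet> (A *v x0)) * (x \<bullet> x)" for x
  proof (cases "x = 0")
    case False
    have "(x \<bullet> (A *v x)) / (norm x)^2 = (x /\<^sub>R norm x) \<bullet> (A *v (x /\<^sub>R norm x))"
      by (simp add: matrix_vector_mult_scaleR power2_eq_square field_simps)
    also have "\<dots> \<le> x0 \<bullet> (A *v x0)"
      using False by (intro max) simp
    finally show ?thesis
      using False by (simp add: divide_le_eq power2_norm_eq_inner)
  qed simp
  with x0 that show ?thesis by blast
qed

text \<open>Perturbing x0 along w = \<mu> x0 - A x0 gives a quadratic in t whose linear coefficient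
  is 2 (w \<bullet> w); its nonnegativity forces w = 0.\<close>

lemma symmetric_rayleigh_maximizer_is_eigenvector:
  fixes A :: "real^'n^'n"
  assumes sym: "transpose A = A"
    and bound: "\<And>x. x \<bullet> (A *v x) \<le> \<mu> * (x \<bullet> x)"
    and attained: "x0 \<bullet> (A *v x0) = \<mu> * (x0 \<bullet> x0)"
  shows "A *v x0 = \<mu> *\<^sub>R x0"
proof -
  define w where "w = \<mu> *\<^sub>R x0 - A *v x0"
  have ww: "w \<bullet> w = \<mu> * (x0 \<bullet> w) - (A *v x0) \<bullet> w"
    by (simp add: w_def inner_diff_left)
  have "0 \<le> 2 * (w \<bullet> w) * t + (\<mu> * (w \<bullet> w) - w \<bullet> (A *v w)) * t^2" for t
  proof -
    let ?x = "x0 + t *\<^sub>R w"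
    have quad: "?x \<bullet> (A *v ?x) = x0 \<bullet> (A *v x0) + 2 * t * ((A *v x0) \<bullet> w) + t^2 * (w \<bullet> (A *v w))"
      using symmetric_matrix_inner_commute[OF sym, of w x0]
      by (simp add: matrix_vector_right_distrib matrix_vector_mult_scaleR inner_add_left
          inner_add_right inner_commute power2_eq_square algebra_simps)
    have norm: "?x \<bullet> ?x = x0 \<bullet> x0 + 2 * t * (x0 \<bullet> w) + t^2 * (w \<bullet> w)"
      by (simp add: inner_add_left inner_add_right inner_commute power2_eq_square algebra_simps)
    have "0 \<le> \<mu> * (?x \<bullet> ?x) - ?x \<bullet> (A *v ?x)"
      using bound[of ?x] by simp
    also have "\<dots> = 2 * (\<mu> * (x0 \<bullet> w) - (A *v x0) \<bullet> w) * t + (\<mu> * (w \<bullet> w) - w \<bullet> (A *v w)) * t^2"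
      unfolding quad norm attained by (simp add: algebra_simps)
    finally show ?thesis
      unfolding ww .
  qed
  then have "2 * (w \<bullet> w) = 0"
    by (rule quadratic_nonneg_imp_linear_coeff_zero)
  then show ?thesis by (simp add: w_def)
qed

lemma finite_real_eigenvalues_symmetric:
  fixes A :: "real^'n^'n"
  assumes sym: "transpose A = A"
  shows "finite (real_eigenvalues A)"
proof -
  let ?R = "real_eigenvalues A"
  define g where "g l = (SOME u. u \<noteq> 0 \<and> A *v u = l *\<^sub>R u)" for l
  have g: "g l \<noteq> 0 \<and> A *v g l = l *\<^sub>R g l" if "l \<in> ?R" for l
    using that unfolding g_def real_eigenvalues_def by (metis (mono_tags, lifting) mem_Collect_eq someI_ex)
  have "inj_on g ?R"
  proof (rule inj_onI)
    fix a b assume a: "a \<in> ?R" and b: "b \<in> ?R" and "g a = g b"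
    then have "a *\<^sub>R g a = b *\<^sub>R g a" using g[OF a] g[OF b] by metis
    then show "a = b" using g[OF a] by (simp add: scaleR_cancel_right)
  qed
  moreover have "pairwise orthogonal (g ` ?R)"
  proof (rule pairwiseI, clarify)
    fix a b assume a: "a \<in> ?R" and b: "b \<in> ?R" and "g a \<noteq> g b"
    then have "a \<noteq> b" by auto
    have "a * (g a \<bullet> g b) = g a \<bullet> (A *v g b)"
      using g[OF a] symmetric_matrix_inner_commute[OF sym, of "g a" "g b"] by simp
    also have "\<dots> = b * (g a \<bullet> g b)" using g[OF b] by simp
    finally show "orthogonal (g a) (g b)"
      using \<open>a \<noteq> b\<close> by (simp add: orthogonal_def)
  qed
  then have "finite (g ` ?R)" by (rule pairwise_orthogonal_imp_finite)
  ultimately show ?thesis by (metis finite_imageD)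
qed

lemma symmetric_diagonal_le_largest_eigenvalue:
  fixes A :: "real^'n^'n"
  assumes sym: "transpose A = A"
  shows "A $ i $ i \<le> largest_eigenvalue A"
proof -
  obtain x0 where x0: "norm x0 = 1"
    and bound: "\<And>x. x \<bullet> (A *v x) \<le> (x0 \<bullet> (A *v x0)) * (x \<bullet> x)"
    using quadratic_form_attains_max_on_sphere[of A] by blast
  let ?\<mu> = "x0 \<bullet> (A *v x0)"
  have "x0 \<bullet> x0 = 1" using x0 by (simp add: norm_eq_sqrt_inner)
  then have "A *v x0 = ?\<mu> *\<^sub>R x0"
    by (intro symmetric_rayleigh_maximizer_is_eigenvector[OF sym bound]) simp
  moreover have "x0 \<noteq> 0" using x0 by auto
  ultimately have "?\<mu> \<in> real_eigenvalues A"
    unfolding real_eigenvalues_def by blast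
  then have "?\<mu> \<le> largest_eigenvalue A"
    unfolding largest_eigenvalue_def using finite_real_eigenvalues_symmetric[OF sym] by simp
  moreover have "A $ i $ i \<le> ?\<mu>"
    using bound[of "axis i 1"]
    by (simp add: matrix_vector_mult_basis inner_axis' inner_axis_axis column_def)
  ultimately show ?thesis by linarith
qed

lemma hlaplacian_symmetric: "transpose (hlaplacian E) = hlaplacian E"
  unfolding transpose_def hlaplacian_def by (simp add: vec_eq_iff conj_commute eq_commute)

lemma hlaplacian_diagonal: "hlaplacian E $ i $ i = real (hdeg E i)"
  unfolding hlaplacian_def by simp

lemma hconnected_edges_nonempty:
  assumes "hconnected (E :: 'n::finite set set)" and "CARD('n) \<ge> 2"
  shows "E \<noteq> {}"
proof
  assume "E = {}"
  then have "hadj E = {}" by (simp add: hadj_def)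
  obtain i j :: 'n where "i \<noteq> j"
    using assms(2) by (metis card_2_iff' ex_card obtain_subset_with_card_n)
  with \<open>hadj E = {}\<close> assms(1) show False unfolding hconnected_def by auto
qed

lemma edge_excess_average_le:
  fixes e :: "'a set" and d :: "'a \<Rightarrow> real"
  assumes "card e \<ge> 1" and "\<And>i. d i \<le> \<mu>"
  shows "((\<Sum>i\<in>e. d i) - real (card e)) / real (card e) \<le> \<mu>"
proof -
  have "(\<Sum>i\<in>e. d i) \<le> real (card e) * \<mu>"
    using sum_mono[of e d "\<lambda>_. \<mu>"] assms(2) by simp
  with assms(1) show ?thesis by (simp add: divide_le_eq mult.commute)
qed

theorem corollary5:
  fixes E :: "'n::finite set set"
  assumes "hypergraph E"
    and "hconnected E"
    and "CARD('n) > 2"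
  shows "largest_eigenvalue (hlaplacian E) \<ge>
    Min ((\<lambda>e. ((\<Sum>i\<in>e. real (hdeg E i)) - real (card e)) / real (card e)) ` E)"
proof -
  let ?f = "\<lambda>e. ((\<Sum>i\<in>e. real (hdeg E i)) - real (card e)) / real (card e)"
  obtain e where e: "e \<in> E"
    using hconnected_edges_nonempty[OF assms(2)] assms(3) by fastforce
  have "card e \<ge> 1"
    using assms(1) e unfolding hypergraph_def by fastforce
  have degree_le: "real (hdeg E i) \<le> largest_eigenvalue (hlaplacian E)" for i
    using symmetric_diagonal_le_largest_eigenvalue[OF hlaplacian_symmetric, of E i]
    by (simp add: hlaplacian_diagonal)
  have "Min (?f ` E) \<le> ?f e" using e by simp
  also have "\<dots> \<le> largest_eigenvalue (hlaplacian E)"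
    using \<open>card e \<ge> 1\<close> degree_le by (rule edge_excess_average_le)
  finally show ?thesis .
qed

end
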